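(* Let $m,n,\beta\geq 1$ be integers and let $A\in\mathbb{C}^{m\times\beta}$, $B\in\mathbb{C}^{n\times\beta}$ be nonzero. Then \[ AA^*\otimes BB^* \;\succcurlyeq\; \frac{1}{\min(\operatorname{rk} AA^*,\operatorname{rk} BB^* )}\,\mathrm{vec}(BA^T)\,\mathrm{vec}(BA^T)^* \;\succcurlyeq\; 0 . \] Moreover, the coefficient $1/\min(\operatorname{rk}AA^*,\operatorname{rk}BB^* )$ is best possible, in the sense that it cannot be replaced by a larger constant uniformly over all such $A,B$: there exist nonzero $A\in\mathbb{C}^{m\times\beta}$, $B\in\mathbb{C}^{n\times\beta}$ and $u\in\mathbb{C}^{mn}$ with $\mathrm{vec}(BA^T)^*u\neq 0$ such that $u^*(AA^*\otimes BB^* )u=\frac{1}{\min(\operatorname{rk}AA^*,\operatorname{rk}BB^* )}\,|\mathrm{vec}(BA^T)^*u|^2$.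
   Context: $A\otimes B$ denotes the standard Kronecker product (the block matrix whose $(i,j)$-th block is $a_{ij}B$). For $P\in\mathbb{C}^{n\times m}$, $\mathrm{vec}(P)\in\mathbb{C}^{mn}$ is the column vector obtained by stacking the columns of $P$ (so its entry in position $n(i_1-1)+i_2$ is $P_{i_2,i_1}$). $\operatorname{rk}$ denotes rank, $X^*$ the conjugate transpose, $X^T$ the transpose. For Hermitian matrices, $X\succcurlyeq Y$ (Loewner order) means $X-Y$ is positive semidefinite. *)

theory Defs
  imports "HOL-Analysis.Analysis"
begin

text \<open>Matrices in C^(p x q) are represented as complex^'q^'p (rows indexed by 'p).
  Index sets {1..mn} are represented by the product type 'm \<times> 'n, where the pair (i1,i2)
  corresponds to position n(i1-1)+i2 (lexicographic order).\<close>

definition conj_transpose :: "complex^'q^'p \<Rightarrow> complex^'p^'q" where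
  "conj_transpose X = (\<chi> i j. cnj (X $ j $ i))"

definition kron :: "complex^'j^'i \<Rightarrow> complex^'l^'k \<Rightarrow> complex^('j \<times> 'l)^('i \<times> 'k)" where
  "kron X Y = (\<chi> r c. X $ fst r $ fst c * Y $ snd r $ snd c)"

definition vecm :: "complex^'m^'n \<Rightarrow> complex^('m \<times> 'n)" where
  "vecm P = (\<chi> p. P $ snd p $ fst p)"

definition outer :: "complex^'k \<Rightarrow> complex^'k \<Rightarrow> complex^'k^'k" where
  "outer x y = (\<chi> i j. x $ i * cnj (y $ j))"

definition cinner :: "complex^'k \<Rightarrow> complex^'k \<Rightarrow> complex" where
  "cinner x y = (\<Sum>i\<in>UNIV. cnj (x $ i) * y $ i)"

definition hermitian :: "complex^'k^'k \<Rightarrow> bool" where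
  "hermitian X \<longleftrightarrow> conj_transpose X = X"

definition psd :: "complex^'k^'k \<Rightarrow> bool" where
  "psd X \<longleftrightarrow> hermitian X \<and> (\<forall>v. cinner v (X *v v) \<in> \<real> \<and> 0 \<le> Re (cinner v (X *v v)))"

definition loewner_ge :: "complex^'k^'k \<Rightarrow> complex^'k^'k \<Rightarrow> bool" where
  "loewner_ge X Y \<longleftrightarrow> psd (X - Y)"

end

theory Submission
  imports Defs
begin

text \<open>
  Write v = vec P and N = A^T P^* B. Then v^* (AA^* \<otimes> BB^*) v = |N|^2 and
  vec(BA^T)^* v = conj (tr N), where |N| is the Frobenius norm, i.e. the norm of the type
  complex^'b^'b. Since rk AA^* = rk A, the Loewner inequality becomes
  |tr N|^2 \<le> min (rk A) (rk B) |N|^2. The rows of N lie in the row space of B and those of N^T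
  in the row space of A, and |tr N|^2 \<le> d |N|^2 whenever the rows of N lie in a space spanned
  by d vectors: splitting off the components of the rows along one spanning vector v costs one
  Cauchy-Schwarz step and leaves rows orthogonal to v, in a space spanned by d - 1 vectors.
  All-ones matrices attain equality.
\<close>

lemma cinner_add_left: "cinner (x + y) z = cinner x z + cinner y z"
  by (simp add: cinner_def distrib_right sum.distrib)

lemma cinner_scale_left: "cinner (a *s x) y = cnj a * cinner x y"
  by (simp add: cinner_def sum_distrib_left algebra_simps)

lemma cinner_zero_left [simp]: "cinner 0 y = 0"
  by (simp add: cinner_def)

lemma cinner_add_right: "cinner x (y + z) = cinner x y + cinner x z"
  by (simp add: cinner_def distrib_left sum.distrib)

lemma cinner_diff_right: "cinner x (y - z) = cinner x y - cinner x z"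
  by (simp add: cinner_def right_diff_distrib sum_subtractf)

lemma cinner_scale_right: "cinner x (a *s y) = a * cinner x y"
  by (simp add: cinner_def sum_distrib_left algebra_simps)

lemma power2_norm_vec: "(norm x)\<^sup>2 = (\<Sum>i\<in>UNIV. (norm (x $ i))\<^sup>2)"
  by (simp add: norm_vec_def L2_set_def sum_nonneg)

lemma cinner_self: "cinner x x = of_real ((norm x)\<^sup>2)"
  unfolding cinner_def power2_norm_vec of_real_sum
  by (simp add: complex_norm_square mult.commute del: of_real_power)

lemma cinner_self_eq_0_iff [simp]: "cinner x x = 0 \<longleftrightarrow> x = 0"
  by (simp add: cinner_self)

lemma cinner_Cauchy_Schwarz: "cmod (cinner x y) \<le> norm x * norm y"
proof -
  have "cmod (cinner x y) \<le> (\<Sum>i\<in>UNIV. \<bar>cmod (x $ i)\<bar> * \<bar>cmod (y $ i)\<bar>)"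
    unfolding cinner_def by (rule order_trans[OF norm_sum]) (simp add: norm_mult)
  also have "\<dots> \<le> norm x * norm y"
    unfolding norm_vec_def by (rule L2_set_mult_ineq)
  finally show ?thesis .
qed

lemma cnj_cinner: "cnj (cinner x y) = cinner y x"
  by (simp add: cinner_def mult.commute)

lemma cinner_eq_0_on_span:
  assumes "\<And>x. x \<in> S \<Longrightarrow> cinner x w = 0" and "y \<in> vec.span S"
  shows "cinner y w = 0"
  using assms(2)
proof (induction rule: vec.span_induct)
  show "vec.subspace {y. cinner y w = 0}"
    by (auto simp: vec.subspace_def cinner_add_left cinner_scale_left)
qed (use assms(1) in auto)

lemma power2_norm_add_orthogonal:
  assumes "cinner v z = 0"
  shows "(norm (a *s v + z))\<^sup>2 = (cmod a)\<^sup>2 * (norm v)\<^sup>2 + (norm z)\<^sup>2"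
proof -
  have "cinner z v = 0"
    using assms cnj_cinner[of v z] by simp
  have "complex_of_real ((norm (a *s v + z))\<^sup>2) = cinner (a *s v + z) (a *s v + z)"
    by (simp only: cinner_self)
  also have "\<dots> = cnj a * a * cinner v v + cinner z z"
    using assms \<open>cinner z v = 0\<close>
    by (simp add: cinner_add_left cinner_add_right cinner_scale_left cinner_scale_right)
  also have "\<dots> = of_real ((cmod a)\<^sup>2 * (norm v)\<^sup>2 + (norm z)\<^sup>2)"
    by (simp add: cinner_self mult.commute flip: complex_norm_square)
  finally show ?thesis
    by (simp only: of_real_eq_iff)
qed

definition perp_component :: "complex^'n \<Rightarrow> complex^'n \<Rightarrow> complex^'n" where
  "perp_component v y = y - (cinner v y / cinner v v) *s v"

lemma cinner_perp_component: "cinner v (perp_component v y) = 0"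
  by (cases "v = 0") (simp_all add: perp_component_def cinner_diff_right cinner_scale_right)

lemma perp_component_self: "perp_component v v = 0"
  by (cases "v = 0") (simp_all add: perp_component_def)

lemma linear_perp_component: "Vector_Spaces.linear (*s) (*s) (perp_component v)"
  unfolding Vector_Spaces.linear_iff
  by (auto simp: perp_component_def cinner_add_right cinner_scale_right vec.vector_space_axioms
      algebra_simps add_divide_distrib vec_eq_iff)

lemma power2_add_le_Suc_mult:
  fixes s t g n :: real
  assumes "0 \<le> g" "0 \<le> n" "t\<^sup>2 \<le> n * g"
  shows "(s + t)\<^sup>2 \<le> (n + 1) * (s\<^sup>2 + g)"
proof (cases "n = 0")
  case True
  then show ?thesis
    using assms by simp
next
  case False
  have "n * (s + t)\<^sup>2 \<le> n * (s + t)\<^sup>2 + (n * s - t)\<^sup>2"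
    by simp
  also have "\<dots> = (n + 1) * (n * s\<^sup>2 + t\<^sup>2)"
    by (simp add: power2_eq_square algebra_simps)
  also have "\<dots> \<le> (n + 1) * (n * s\<^sup>2 + n * g)"
    using assms by (intro mult_left_mono add_left_mono) auto
  also have "\<dots> = n * ((n + 1) * (s\<^sup>2 + g))"
    by (simp add: algebra_simps)
  finally show ?thesis
    using False \<open>0 \<le> n\<close> by simp
qed

lemma cmod_trace_sq_le_card_mult_norm_sq:
  fixes M :: "complex^'n^'n"
  assumes "finite S" and "\<And>i. M $ i \<in> vec.span S"
  shows "(cmod (trace M))\<^sup>2 \<le> real (card S) * (norm M)\<^sup>2"
  using assms
proof (induction "card S" arbitrary: S M rule: less_induct)
  case less
  show ?case
  proof (cases "S = {}")
    case True
    then have "M = 0"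
      using less.prems(2) by (simp add: vec_eq_iff)
    then show ?thesis
      by (simp add: trace_def)
  next
    case False
    then obtain v where "v \<in> S"
      by blast
    define a where "a i = cinner v (M $ i) / cinner v v" for i
    define Z where "Z = (\<chi> i. perp_component v (M $ i))"
    define S' where "S' = perp_component v ` (S - {v})"
    have M_row: "M $ i = a i *s v + Z $ i" for i
      by (simp add: a_def Z_def perp_component_def)
    have "perp_component v ` S = insert 0 S'"
      using \<open>v \<in> S\<close> by (auto simp: S'_def perp_component_self intro: image_eqI[where x = v])
    then have "Z $ i \<in> vec.span S'" for i
      using vec.linear_span_image[OF linear_perp_component, of v S] less.prems(2)
      by (auto simp: Z_def)
    moreover have "card S' < card S"
      using less.prems(1) \<open>v \<in> S\<close> unfolding S'_def
      by (meson card_Diff1_less card_image_le finite_Diff order_le_less_trans)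
    ultimately have IH: "(cmod (trace Z))\<^sup>2 \<le> real (card S') * (norm Z)\<^sup>2"
      using less.hyps less.prems(1) by (simp add: S'_def)
    have Z_perp: "cinner v (Z $ i) = 0" for i
      by (simp add: Z_def cinner_perp_component)
    define \<alpha> where "\<alpha> = (\<chi> i. cnj (a i))"
    have "trace M = cinner \<alpha> v + trace Z"
      by (simp add: trace_def cinner_def \<alpha>_def M_row sum.distrib)
    then have "cmod (trace M) \<le> cmod (cinner \<alpha> v) + cmod (trace Z)"
      by (simp add: norm_triangle_ineq)
    then have trace_M: "cmod (trace M) \<le> norm \<alpha> * norm v + cmod (trace Z)"
      using cinner_Cauchy_Schwarz[of \<alpha> v] by linarith
    have "(norm M)\<^sup>2 = (\<Sum>i\<in>UNIV. (norm (a i *s v + Z $ i))\<^sup>2)"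
      by (simp add: power2_norm_vec[of M] M_row)
    also have "\<dots> = (\<Sum>i\<in>UNIV. (cmod (a i))\<^sup>2 * (norm v)\<^sup>2 + (norm (Z $ i))\<^sup>2)"
      by (simp add: power2_norm_add_orthogonal Z_perp)
    also have "\<dots> = (norm \<alpha> * norm v)\<^sup>2 + (norm Z)\<^sup>2"
      unfolding power_mult_distrib power2_norm_vec[of \<alpha>] power2_norm_vec[of Z]
      by (simp add: \<alpha>_def sum.distrib sum_distrib_right)
    finally have norm_M: "(norm M)\<^sup>2 = (norm \<alpha> * norm v)\<^sup>2 + (norm Z)\<^sup>2" .
    have "(cmod (trace M))\<^sup>2 \<le> (norm \<alpha> * norm v + cmod (trace Z))\<^sup>2"
      using trace_M by (simp add: power_mono)
    also have "\<dots> \<le> (real (card S') + 1) * (norm M)\<^sup>2"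
      unfolding norm_M using IH by (intro power2_add_le_Suc_mult) auto
    also have "\<dots> \<le> real (card S) * (norm M)\<^sup>2"
      using \<open>card S' < card S\<close> by (intro mult_right_mono) auto
    finally show ?thesis .
  qed
qed

lemma cmod_trace_sq_le_dim_mult_norm_sq:
  fixes M :: "complex^'n^'n"
  assumes "\<And>i. M $ i \<in> vec.span V"
  shows "(cmod (trace M))\<^sup>2 \<le> real (vec.dim V) * (norm M)\<^sup>2"
proof -
  obtain B where "B \<subseteq> V" "vec.independent B" "V \<subseteq> vec.span B" "card B = vec.dim V"
    by (rule vec.basis_exists)
  then have "finite B" "vec.span V \<subseteq> vec.span B"
    by (auto simp: vec.finiteI_independent vec.span_minimal)
  then show ?thesis
    using cmod_trace_sq_le_card_mult_norm_sq[of B M] assms \<open>card B = vec.dim V\<close> by auto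
qed

lemma rank_mult_conj_transpose:
  fixes A :: "complex^'n^'m"
  shows "rank (A ** conj_transpose A) = rank A"
proof -
  let ?f = "\<lambda>x. map_matrix cnj A *v x"
  have "row i (A ** conj_transpose A) = ?f (row i A)" for i
    by (simp add: vec_eq_iff row_def matrix_vector_mult_def matrix_matrix_mult_def
        conj_transpose_def mult.commute)
  then have rows_eq: "rows (A ** conj_transpose A) = ?f ` rows A"
    unfolding rows_def by auto
  have "w = 0" if "w \<in> vec.span (rows A)" and "?f w = 0" for w
  proof -
    have "cinner x w = 0" if "x \<in> rows A" for x
      using that \<open>?f w = 0\<close>
      by (auto simp: rows_def row_def cinner_def matrix_vector_mult_def vec_eq_iff)
    then have "cinner w w = 0"
      using cinner_eq_0_on_span \<open>w \<in> vec.span (rows A)\<close> by blast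
    then show ?thesis
      by simp
  qed
  then have "inj_on ?f (vec.span (rows A))"
    by (intro inj_onI) (metis eq_iff_diff_eq_0 matrix_vector_mult_diff_distrib vec.span_diff)
  then show ?thesis
    unfolding row_rank_def_gen rows_eq
    by (rule vec.dim_image_eq[OF matrix_vector_mul_linear_gen])
qed

lemma trace_transpose: "trace (transpose M) = trace M"
  by (simp add: trace_def transpose_def)

lemma norm_transpose: "norm (transpose M) = norm M"
proof -
  have "(norm (transpose M))\<^sup>2 = (norm M)\<^sup>2"
    unfolding power2_norm_vec[of "transpose M"] power2_norm_vec[of M] power2_norm_vec[of "_ $ _"]
    by (simp add: transpose_def) (rule sum.swap)
  then show ?thesis
    by simp
qed

lemma sum_swap4:
  "(\<Sum>r\<in>R. \<Sum>s\<in>S. \<Sum>d\<in>D. \<Sum>c\<in>C. f r s d c) = (\<Sum>c\<in>C. \<Sum>d\<in>D. \<Sum>r\<in>R. \<Sum>s\<in>S. f r s d c)"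
  by (simp only: sum.swap[of _ _ D]) (simp only: sum.swap[of _ _ C])

text \<open>For v = vecm P this is transpose A ** conj_transpose P ** B.\<close>

definition sandwich :: "complex^'b^'m \<Rightarrow> complex^'b^'n \<Rightarrow> complex^('m \<times> 'n) \<Rightarrow> complex^'b^'b" where
  "sandwich A B v = (\<chi> c d. \<Sum>r\<in>UNIV. A $ fst r $ c * cnj (v $ r) * B $ snd r $ d)"

lemma quadratic_form_kron_gram:
  fixes A :: "complex^'b^'m" and B :: "complex^'b^'n"
  shows "cinner v (kron (A ** conj_transpose A) (B ** conj_transpose B) *v v)
    = of_real ((norm (sandwich A B v))\<^sup>2)"
proof -
  let ?N = "sandwich A B v"
  have "cinner v (kron (A ** conj_transpose A) (B ** conj_transpose B) *v v)
    = (\<Sum>r\<in>UNIV. \<Sum>s\<in>UNIV. \<Sum>d\<in>UNIV. \<Sum>c\<in>UNIV.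
        (A $ fst r $ c * cnj (v $ r) * B $ snd r $ d) * cnj (A $ fst s $ c * cnj (v $ s) * B $ snd s $ d))"
    by (simp add: cinner_def kron_def matrix_vector_mult_def matrix_matrix_mult_def conj_transpose_def
        sum_distrib_left sum_distrib_right mult_ac)
  also have "\<dots> = (\<Sum>c\<in>UNIV. \<Sum>d\<in>UNIV. \<Sum>r\<in>UNIV. \<Sum>s\<in>UNIV.
        (A $ fst r $ c * cnj (v $ r) * B $ snd r $ d) * cnj (A $ fst s $ c * cnj (v $ s) * B $ snd s $ d))"
    by (rule sum_swap4)
  also have "\<dots> = (\<Sum>c\<in>UNIV. \<Sum>d\<in>UNIV. ?N $ c $ d * cnj (?N $ c $ d))"
    by (simp add: sandwich_def sum_product)
  also have "\<dots> = of_real ((norm ?N)\<^sup>2)"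
    unfolding power2_norm_vec[of ?N] power2_norm_vec[of "?N $ _"]
    by (simp add: of_real_sum complex_norm_square del: of_real_power)
  finally show ?thesis .
qed

lemma cinner_vecm_mult_transpose:
  fixes A :: "complex^'b^'m" and B :: "complex^'b^'n"
  shows "cinner (vecm (B ** transpose A)) v = cnj (trace (sandwich A B v))"
  by (simp add: cinner_def vecm_def sandwich_def trace_def matrix_matrix_mult_def transpose_def
      sum_distrib_left mult_ac sum.swap[of _ "UNIV :: 'b set"])

lemma sandwich_row_in_span: "sandwich A B v $ c \<in> vec.span (rows B)"
proof -
  have "sandwich A B v $ c = (\<Sum>r\<in>UNIV. (A $ fst r $ c * cnj (v $ r)) *s row (snd r) B)"
    by (simp add: vec_eq_iff sandwich_def row_def)
  also have "\<dots> \<in> vec.span (rows B)"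
    by (intro vec.span_sum vec.span_scale vec.span_base) (auto simp: rows_def)
  finally show ?thesis .
qed

lemma transpose_sandwich_row_in_span: "transpose (sandwich A B v) $ d \<in> vec.span (rows A)"
proof -
  have "transpose (sandwich A B v) $ d = (\<Sum>r\<in>UNIV. (cnj (v $ r) * B $ snd r $ d) *s row (fst r) A)"
    by (simp add: vec_eq_iff sandwich_def transpose_def row_def mult_ac)
  also have "\<dots> \<in> vec.span (rows A)"
    by (intro vec.span_sum vec.span_scale vec.span_base) (auto simp: rows_def)
  finally show ?thesis .
qed

lemma cmod_trace_sandwich_sq_le:
  fixes A :: "complex^'b^'m" and B :: "complex^'b^'n"
  shows "(cmod (trace (sandwich A B v)))\<^sup>2
    \<le> real (min (rank (A ** conj_transpose A)) (rank (B ** conj_transpose B))) * (norm (sandwich A B v))\<^sup>2"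
proof -
  have "(cmod (trace (sandwich A B v)))\<^sup>2 \<le> real (rank A) * (norm (sandwich A B v))\<^sup>2"
    using cmod_trace_sq_le_dim_mult_norm_sq[OF transpose_sandwich_row_in_span]
    by (simp add: row_rank_def_gen trace_transpose norm_transpose)
  moreover have "(cmod (trace (sandwich A B v)))\<^sup>2 \<le> real (rank B) * (norm (sandwich A B v))\<^sup>2"
    using cmod_trace_sq_le_dim_mult_norm_sq[OF sandwich_row_in_span]
    by (simp add: row_rank_def_gen)
  ultimately show ?thesis
    by (simp add: rank_mult_conj_transpose min_def)
qed

lemma hermitian_diff: "hermitian X \<Longrightarrow> hermitian Y \<Longrightarrow> hermitian (X - Y)"
  by (simp add: hermitian_def conj_transpose_def vec_eq_iff)

lemma hermitian_scaleR: "hermitian X \<Longrightarrow> hermitian (a *\<^sub>R X)"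
  by (simp add: hermitian_def conj_transpose_def vec_eq_iff)

lemma hermitian_outer_self: "hermitian (outer w w)"
  by (simp add: hermitian_def conj_transpose_def outer_def vec_eq_iff)

lemma hermitian_mult_conj_transpose: "hermitian (A ** conj_transpose A)"
  by (simp add: hermitian_def conj_transpose_def matrix_matrix_mult_def vec_eq_iff mult.commute)

lemma hermitian_kron: "hermitian X \<Longrightarrow> hermitian Y \<Longrightarrow> hermitian (kron X Y)"
  by (simp add: hermitian_def conj_transpose_def kron_def vec_eq_iff)

lemma cinner_diff_matrix: "cinner v ((X - Y) *v v) = cinner v (X *v v) - cinner v (Y *v v)"
  by (simp add: cinner_def matrix_vector_mult_def sum_subtractf left_diff_distrib right_diff_distrib)

lemma cinner_scaleR_matrix: "cinner v ((a *\<^sub>R X) *v v) = of_real a * cinner v (X *v v)"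
  by (simp add: cinner_def matrix_vector_mult_def sum_distrib_left mult_ac)
    (simp add: scaleR_conv_of_real mult_ac)

lemma cinner_outer_self: "cinner v (outer w w *v v) = of_real ((cmod (cinner w v))\<^sup>2)"
  by (simp add: cinner_def outer_def matrix_vector_mult_def sum_distrib_left sum_distrib_right
      complex_norm_square mult_ac del: of_real_power)

lemma psdI:
  assumes "hermitian X" and "\<And>v. cinner v (X *v v) = of_real (q v)" and "\<And>v. 0 \<le> q v"
  shows "psd X"
  using assms by (simp add: psd_def)

lemma loewner_ge_outer_zero: "0 \<le> c \<Longrightarrow> loewner_ge (c *\<^sub>R outer w w) 0"
  unfolding loewner_ge_def diff_zero
  by (rule psdI[where q = "\<lambda>v. c * (cmod (cinner w v))\<^sup>2"])
    (simp_all add: hermitian_scaleR hermitian_outer_self cinner_scaleR_matrix cinner_outer_self)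

text \<open>No nonzeroness hypothesis is needed: if the minimal rank is 0, the coefficient is 1 / 0 = 0.\<close>

lemma loewner_ge_kron_gram_outer:
  fixes A :: "complex^'b^'m" and B :: "complex^'b^'n"
  shows "loewner_ge (kron (A ** conj_transpose A) (B ** conj_transpose B))
    ((1 / of_nat (min (rank (A ** conj_transpose A)) (rank (B ** conj_transpose B))))
      *\<^sub>R outer (vecm (B ** transpose A)) (vecm (B ** transpose A)))"
proof -
  define r where "r = min (rank (A ** conj_transpose A)) (rank (B ** conj_transpose B))"
  let ?N = "sandwich A B"
  have bound: "(cmod (trace (?N v)))\<^sup>2 / real r \<le> (norm (?N v))\<^sup>2" for v
  proof -
    have "(cmod (trace (?N v)))\<^sup>2 \<le> real r * (norm (?N v))\<^sup>2"
      unfolding r_def by (rule cmod_trace_sandwich_sq_le)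
    then show ?thesis
      by (cases "r = 0") (simp_all add: pos_divide_le_eq mult.commute)
  qed
  show ?thesis
    unfolding loewner_ge_def r_def[symmetric]
    by (rule psdI[where q = "\<lambda>v. (norm (?N v))\<^sup>2 - (cmod (trace (?N v)))\<^sup>2 / real r"])
      (simp_all add: hermitian_diff hermitian_scaleR hermitian_outer_self hermitian_kron
        hermitian_mult_conj_transpose cinner_diff_matrix cinner_scaleR_matrix cinner_outer_self
        quadratic_form_kron_gram cinner_vecm_mult_transpose bound)
qed

lemma rank_ones: "rank ((\<chi> i j. 1) :: complex^'n^'m) = 1"
proof -
  have "rows ((\<chi> i j. 1) :: complex^'n^'m) = {\<chi> j. 1}"
    by (auto simp: rows_def row_def)
  moreover have "(\<chi> j. 1) \<noteq> (0 :: complex^'n)"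
    by (simp add: vec_eq_iff)
  ultimately show ?thesis
    by (simp add: row_rank_def_gen)
qed

lemma kron_gram_outer_bound_attained:
  "\<exists>(A :: complex^'b^'m) (B :: complex^'b^'n) (u :: complex^('m \<times> 'n)).
    A \<noteq> 0 \<and> B \<noteq> 0 \<and> cinner (vecm (B ** transpose A)) u \<noteq> 0 \<and>
    cinner u (kron (A ** conj_transpose A) (B ** conj_transpose B) *v u)
      = complex_of_real (1 / of_nat (min (rank (A ** conj_transpose A)) (rank (B ** conj_transpose B)))
          * (cmod (cinner (vecm (B ** transpose A)) u))\<^sup>2)"
proof (intro exI conjI)
  let ?A = "(\<chi> i j. 1) :: complex^'b^'m"
  let ?B = "(\<chi> i j. 1) :: complex^'b^'n"
  let ?u = "(\<chi> r. 1) :: complex^('m \<times> 'n)"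
  define k where "k = real CARD('b) * real CARD('m \<times> 'n)"
  have N: "sandwich ?A ?B ?u = (\<chi> c d. of_nat CARD('m \<times> 'n))"
    by (simp add: sandwich_def vec_eq_iff)
  have trace_N: "trace (sandwich ?A ?B ?u) = of_real k"
    by (simp add: N trace_def k_def)
  have norm_N: "(norm (sandwich ?A ?B ?u))\<^sup>2 = k\<^sup>2"
    unfolding power2_norm_vec[of "sandwich ?A ?B ?u"] power2_norm_vec[of "sandwich ?A ?B ?u $ _"]
    by (simp add: N k_def power_mult_distrib norm_mult power2_eq_square)
  have "k > 0"
    by (simp add: k_def)
  show "?A \<noteq> 0" "?B \<noteq> 0"
    by (simp_all add: vec_eq_iff)
  show "cinner (vecm (?B ** transpose ?A)) ?u \<noteq> 0"
    using \<open>k > 0\<close> by (simp add: cinner_vecm_mult_transpose trace_N)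
  show "cinner ?u (kron (?A ** conj_transpose ?A) (?B ** conj_transpose ?B) *v ?u)
    = complex_of_real (1 / of_nat (min (rank (?A ** conj_transpose ?A)) (rank (?B ** conj_transpose ?B)))
        * (cmod (cinner (vecm (?B ** transpose ?A)) ?u))\<^sup>2)"
    using \<open>k > 0\<close>
    by (simp add: quadratic_form_kron_gram cinner_vecm_mult_transpose rank_mult_conj_transpose rank_ones
        trace_N norm_N)
qed

theorem theorem1p3:
  shows "(\<forall>(A :: complex^'b^'m) (B :: complex^'b^'n). A \<noteq> 0 \<longrightarrow> B \<noteq> 0 \<longrightarrow>
           loewner_ge (kron (A ** conj_transpose A) (B ** conj_transpose B))
             ((1 / of_nat (min (rank (A ** conj_transpose A)) (rank (B ** conj_transpose B))))
                *\<^sub>R outer (vecm (B ** transpose A)) (vecm (B ** transpose A)))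
         \<and> loewner_ge
             ((1 / of_nat (min (rank (A ** conj_transpose A)) (rank (B ** conj_transpose B))))
                *\<^sub>R outer (vecm (B ** transpose A)) (vecm (B ** transpose A)))
             0)
       \<and> (\<exists>(A :: complex^'b^'m) (B :: complex^'b^'n) (u :: complex^('m \<times> 'n)).
           A \<noteq> 0 \<and> B \<noteq> 0 \<and> cinner (vecm (B ** transpose A)) u \<noteq> 0 \<and>
           cinner u (kron (A ** conj_transpose A) (B ** conj_transpose B) *v u)
             = complex_of_real (1 / of_nat (min (rank (A ** conj_transpose A)) (rank (B ** conj_transpose B)))
                 * (cmod (cinner (vecm (B ** transpose A)) u))\<^sup>2))"
proof (intro conjI allI impI)
  fix A :: "complex^'b^'m" and B :: "complex^'b^'n"
  show "loewner_ge (kron (A ** conj_transpose A) (B ** conj_transpose B))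
      ((1 / of_nat (min (rank (A ** conj_transpose A)) (rank (B ** conj_transpose B))))
        *\<^sub>R outer (vecm (B ** transpose A)) (vecm (B ** transpose A)))"
    by (rule loewner_ge_kron_gram_outer)
  show "loewner_ge ((1 / of_nat (min (rank (A ** conj_transpose A)) (rank (B ** conj_transpose B))))
      *\<^sub>R outer (vecm (B ** transpose A)) (vecm (B ** transpose A))) 0"
    by (rule loewner_ge_outer_zero) simp
qed (rule kron_gram_outer_bound_attained)

end
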